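(* Let $\alpha,\beta\in\{-1,0,1\}$, and let $\tilde{C}\in\{0,1\}^{\tilde{K}\times n}$ and $\hat{C}\in\{0,1\}^{\hat{K}\times n}$ be cost matrices of two ordinal objectives on the same $n$ elements. Then the matrix \[ A=\begin{pmatrix}\alpha\,\tilde{C}\\ \mathbf{1}^\top\\ \beta\,\hat{C}\end{pmatrix}, \] where $\mathbf{1}\in\mathbb{R}^n$ is the all-ones vector, is totally unimodular.
   Context: An ordinal objective on $n$ elements with $K$ categories $\eta_1\prec\dots\prec\eta_K$ is given by an assignment $o:\{1,\dots,n\}\to\{\eta_1,\dots,\eta_K\}$; its cost matrix $C\in\{0,1\}^{K\times n}$ has $C_{ji}=1$ if $j\le k$ where $o(i)=\eta_k$, and $C_{ji}=0$ otherwise. $\tilde{C}$ and $\hat{C}$ are such matrices for assignments $\tilde{o}$ (with $\tilde{K}$ categories) and $\hat{o}$ (with $\hat{K}$ categories). A matrix is totally unimodular if every square submatrix has determinant in $\{-1,0,1\}$. *)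

theory Defs
  imports "Jordan_Normal_Form.Determinant" "Jordan_Normal_Form.DL_Submatrix"
begin

text \<open>Categories eta_1 < ... < eta_K are encoded by 1..K; an ordinal objective on
  elements 0..n-1 is a map f with f i in {1..K}.\<close>

definition ordinal_assignment :: "nat \<Rightarrow> nat \<Rightarrow> (nat \<Rightarrow> nat) \<Rightarrow> bool" where
  "ordinal_assignment K n f \<longleftrightarrow> (\<forall>i<n. 1 \<le> f i \<and> f i \<le> K)"

definition ordinal_cost_matrix :: "nat \<Rightarrow> nat \<Rightarrow> (nat \<Rightarrow> nat) \<Rightarrow> int mat" where
  "ordinal_cost_matrix K n f = mat K n (\<lambda>(j, i). if j + 1 \<le> f i then 1 else 0)"

definition totally_unimodular :: "int mat \<Rightarrow> bool" where
  "totally_unimodular A \<longleftrightarrow>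
     (\<forall>I J. I \<subseteq> {..<dim_row A} \<longrightarrow> J \<subseteq> {..<dim_col A} \<longrightarrow> card I = card J \<longrightarrow>
        det (submatrix A I J) \<in> {-1, 0, 1})"

end

theory Submission
  imports Defs
begin

text \<open>After reversing the order of the rows of the top block, each column of the stacked matrix
  is supported on a run of consecutive rows, with every row scaled by a sign in \<open>{-1,0,1}\<close>.
  Such matrices are totally unimodular: their square submatrices have the same shape, and
  in a square one we may take the row \<open>r\<^sub>0\<close> coming first in the order and the shortest
  column interval \<open>c\<^sub>0\<close> meeting it; subtracting column \<open>c\<^sub>0\<close> from the other columns meeting \<open>r\<^sub>0\<close> keeps all
  columns intervals and leaves a single nonzero entry in row \<open>r\<^sub>0\<close>, so Laplace expansion
  reduces the determinant to a smaller matrix of the same shape.\<close>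

text \<open>The explicit ordering
  accommodates the reversed top block of the theorem and lets submatrices inherit the shape
  by mere reindexing.\<close>

definition signed_interval_matrix :: "int mat \<Rightarrow> bool" where
  "signed_interval_matrix A \<longleftrightarrow>
     (\<exists>(s :: nat \<Rightarrow> int) (p :: nat \<Rightarrow> nat) (lo :: nat \<Rightarrow> nat) (hi :: nat \<Rightarrow> nat).
        (\<forall>r<dim_row A. s r \<in> {-1, 0, 1}) \<and>
        (\<forall>r<dim_row A. \<forall>c<dim_col A. A $$ (r, c) = s r * of_bool (lo c \<le> p r \<and> p r < hi c)))"

lemma signed_interval_matrixI:
  fixes s :: "nat \<Rightarrow> int" and p lo hi :: "nat \<Rightarrow> nat"
  assumes "\<And>r. r < dim_row A \<Longrightarrow> s r \<in> {-1, 0, 1}"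
    and "\<And>r c. r < dim_row A \<Longrightarrow> c < dim_col A \<Longrightarrow>
           A $$ (r, c) = s r * of_bool (lo c \<le> p r \<and> p r < hi c)"
  shows "signed_interval_matrix A"
  unfolding signed_interval_matrix_def using assms by blast

lemma signed_interval_matrixE:
  assumes "signed_interval_matrix A"
  obtains s :: "nat \<Rightarrow> int" and p lo hi :: "nat \<Rightarrow> nat"
  where "\<And>r. r < dim_row A \<Longrightarrow> s r \<in> {-1, 0, 1}"
    and "\<And>r c. r < dim_row A \<Longrightarrow> c < dim_col A \<Longrightarrow>
           A $$ (r, c) = s r * of_bool (lo c \<le> p r \<and> p r < hi c)"
  using assms unfolding signed_interval_matrix_def by blast

lemma signed_interval_matrix_submatrix:
  assumes "signed_interval_matrix A"
  shows "signed_interval_matrix (submatrix A I J)"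
proof -
  obtain s and p lo hi :: "nat \<Rightarrow> nat" where s: "\<And>r. r < dim_row A \<Longrightarrow> s r \<in> {-1, 0, 1}"
    and entries: "\<And>r c. r < dim_row A \<Longrightarrow> c < dim_col A \<Longrightarrow>
                    A $$ (r, c) = s r * of_bool (lo c \<le> p r \<and> p r < hi c)"
    using assms by (elim signed_interval_matrixE) blast
  show ?thesis
  proof (rule signed_interval_matrixI[where s = "s \<circ> pick I" and p = "p \<circ> pick I"
        and lo = "lo \<circ> pick J" and hi = "hi \<circ> pick J"])
    fix r assume "r < dim_row (submatrix A I J)"
    then show "(s \<circ> pick I) r \<in> {-1, 0, 1}"
      using s by (simp add: dim_submatrix pick_le)
  next
    fix r c assume "r < dim_row (submatrix A I J)" and "c < dim_col (submatrix A I J)"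
    then show "submatrix A I J $$ (r, c) =
      (s \<circ> pick I) r * of_bool ((lo \<circ> pick J) c \<le> (p \<circ> pick I) r \<and> (p \<circ> pick I) r < (hi \<circ> pick J) c)"
      using entries by (simp add: dim_submatrix submatrix_index pick_le)
  qed
qed

lemma signed_interval_matrix_mat_delete:
  assumes "signed_interval_matrix A"
  shows "signed_interval_matrix (mat_delete A i j)"
proof -
  obtain s and p lo hi :: "nat \<Rightarrow> nat" where s: "\<And>r. r < dim_row A \<Longrightarrow> s r \<in> {-1, 0, 1}"
    and entries: "\<And>r c. r < dim_row A \<Longrightarrow> c < dim_col A \<Longrightarrow>
                    A $$ (r, c) = s r * of_bool (lo c \<le> p r \<and> p r < hi c)"
    using assms by (elim signed_interval_matrixE) blast
  define f where "f r = (if r < i then r else Suc r)" for r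
  define g where "g c = (if c < j then c else Suc c)" for c
  show ?thesis
  proof (rule signed_interval_matrixI[where s = "s \<circ> f" and p = "p \<circ> f"
        and lo = "lo \<circ> g" and hi = "hi \<circ> g"])
    fix r assume "r < dim_row (mat_delete A i j)"
    then show "(s \<circ> f) r \<in> {-1, 0, 1}"
      using s by (simp add: f_def)
  next
    fix r c assume "r < dim_row (mat_delete A i j)" and "c < dim_col (mat_delete A i j)"
    then show "mat_delete A i j $$ (r, c) =
      (s \<circ> f) r * of_bool ((lo \<circ> g) c \<le> (p \<circ> f) r \<and> (p \<circ> f) r < (hi \<circ> g) c)"
      using entries by (simp add: mat_delete_def f_def g_def)
  qed
qed

lemma det_sub_column_from_columns:
  fixes A :: "'a :: comm_ring_1 mat"
  assumes A: "A \<in> carrier_mat n n" and c0: "c0 < n" and S: "S \<subseteq> {..<n} - {c0}"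
  shows "det (mat n n (\<lambda>(r, c). if c \<in> S then A $$ (r, c) - A $$ (r, c0) else A $$ (r, c))) = det A"
proof -
  have "finite S" using S finite_subset by blast
  then show ?thesis
    using S
  proof (induction S rule: finite_induct)
    case empty
    have "mat n n (\<lambda>(r, c). if c \<in> {} then A $$ (r, c) - A $$ (r, c0) else A $$ (r, c)) = A"
      using A by (intro eq_matI) auto
    then show ?case by simp
  next
    case (insert x S)
    define B where "B = mat n n (\<lambda>(r, c). if c \<in> S then A $$ (r, c) - A $$ (r, c0) else A $$ (r, c))"
    have "mat n n (\<lambda>(r, c). if c \<in> insert x S then A $$ (r, c) - A $$ (r, c0) else A $$ (r, c))
        = addcol (-1) x c0 B"
      using insert.prems insert.hyps c0 by (intro eq_matI) (auto simp: B_def mat_addcol_def)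
    also have "det \<dots> = det B"
      using insert.prems by (intro det_addcol[OF c0]) (auto simp: B_def)
    also have "\<dots> = det A"
      using insert unfolding B_def by simp
    finally show ?case .
  qed
qed

lemma det_row_single_entry:
  fixes A :: "'a :: comm_ring_1 mat"
  assumes A: "A \<in> carrier_mat n n" and i: "i < n" and j: "j < n"
    and zero: "\<And>j'. j' < n \<Longrightarrow> j' \<noteq> j \<Longrightarrow> A $$ (i, j') = 0"
  shows "det A = A $$ (i, j) * cofactor A i j"
proof -
  have "det A = (\<Sum>j'<n. A $$ (i, j') * cofactor A i j')"
    by (rule laplace_expansion_row[OF A i])
  also have "\<dots> = (\<Sum>j'\<in>{j}. A $$ (i, j') * cofactor A i j')"
    using j zero by (intro sum.mono_neutral_right) auto
  finally show ?thesis by simp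
qed

text \<open>Row \<open>r\<^sub>0\<close> comes first in the ordering, so the columns meeting it all start no later
  than any row and differ only in where they end.  Subtracting the column \<open>c\<^sub>0\<close> that ends
  first from the others cuts each of them down to the positions from \<open>hi c\<^sub>0\<close> to its own
  end, which clears row \<open>r\<^sub>0\<close> outside \<open>c\<^sub>0\<close>.\<close>

lemma interval_columns_clear_first_row:
  fixes A :: "'a :: comm_ring_1 mat" and s :: "nat \<Rightarrow> 'a" and p lo hi :: "nat \<Rightarrow> nat"
  assumes A: "A \<in> carrier_mat n n"
    and entries: "\<And>r c. r < n \<Longrightarrow> c < n \<Longrightarrow>
                    A $$ (r, c) = s r * of_bool (lo c \<le> p r \<and> p r < hi c)"
    and r0: "r0 < n" and r0_first: "\<And>r. r < n \<Longrightarrow> p r0 \<le> p r"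
    and c0: "c0 < n" "lo c0 \<le> p r0" "p r0 < hi c0"
    and c0_shortest: "\<And>c. c < n \<Longrightarrow> lo c \<le> p r0 \<Longrightarrow> p r0 < hi c \<Longrightarrow> hi c0 \<le> hi c"
  obtains A' :: "'a mat" and lo' :: "nat \<Rightarrow> nat"
  where "A' \<in> carrier_mat n n" and "det A' = det A"
    and "\<And>r c. r < n \<Longrightarrow> c < n \<Longrightarrow>
           A' $$ (r, c) = s r * of_bool (lo' c \<le> p r \<and> p r < hi c)"
    and "\<And>c. c < n \<Longrightarrow> A' $$ (r0, c) = (if c = c0 then s r0 else 0)"
proof -
  define S where "S = {c. c < n \<and> c \<noteq> c0 \<and> lo c \<le> p r0 \<and> p r0 < hi c}"
  define A' where "A' = mat n n (\<lambda>(r, c). if c \<in> S then A $$ (r, c) - A $$ (r, c0) else A $$ (r, c))"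
  define lo' where "lo' c = (if c \<in> S then hi c0 else lo c)" for c
  have det: "det A' = det A"
    unfolding A'_def using A c0(1) by (intro det_sub_column_from_columns) (auto simp: S_def)
  have entries': "A' $$ (r, c) = s r * of_bool (lo' c \<le> p r \<and> p r < hi c)"
    if r: "r < n" and c: "c < n" for r c
  proof (cases "c \<in> S")
    case True
    then have "lo c \<le> p r" "lo c0 \<le> p r" "hi c0 \<le> hi c"
      using c0 c0_shortest r0_first[OF r] by (auto simp: S_def)
    then show ?thesis
      using True r c c0(1) by (auto simp: A'_def lo'_def entries)
  qed (use r c in \<open>simp add: A'_def lo'_def entries\<close>)
  have "A' $$ (r0, c) = (if c = c0 then s r0 else 0)" if c: "c < n" for c
    using c c0 r0 by (auto simp: entries' lo'_def S_def)
  with det entries' show thesis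
    by (intro that[of A' lo']) (auto simp: A'_def)
qed

lemma det_signed_interval_matrix:
  assumes "signed_interval_matrix A" and "A \<in> carrier_mat n n"
  shows "det A \<in> {-1, 0, 1}"
  using assms
proof (induction n arbitrary: A)
  case 0
  then show ?case by simp
next
  case (Suc k)
  note A = Suc.prems(2)
  obtain s and p lo hi :: "nat \<Rightarrow> nat" where s: "\<And>r. r < Suc k \<Longrightarrow> s r \<in> {-1, 0, 1}"
    and entries: "\<And>r c. r < Suc k \<Longrightarrow> c < Suc k \<Longrightarrow>
                    A $$ (r, c) = s r * of_bool (lo c \<le> p r \<and> p r < hi c)"
    using Suc.prems by (elim signed_interval_matrixE) auto
  obtain r0 where r0: "r0 < Suc k" and r0_first: "\<And>r. r < Suc k \<Longrightarrow> p r0 \<le> p r"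
    using ex_has_least_nat[of "\<lambda>r. r < Suc k" 0 p] by auto
  show ?case
  proof (cases "\<exists>c<Suc k. lo c \<le> p r0 \<and> p r0 < hi c")
    case False
    then have "det A = A $$ (r0, 0) * cofactor A r0 0"
      using entries r0 by (intro det_row_single_entry[OF A]) auto
    then show ?thesis
      using False entries r0 by simp
  next
    case True
    then obtain c0 where c0: "c0 < Suc k" "lo c0 \<le> p r0" "p r0 < hi c0"
      and c0_shortest: "\<And>c. c < Suc k \<Longrightarrow> lo c \<le> p r0 \<Longrightarrow> p r0 < hi c \<Longrightarrow> hi c0 \<le> hi c"
      using ex_has_least_nat[of "\<lambda>c. c < Suc k \<and> lo c \<le> p r0 \<and> p r0 < hi c" _ hi] by blast
    obtain A' lo' where A': "A' \<in> carrier_mat (Suc k) (Suc k)" and det: "det A' = det A"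
      and entries': "\<And>r c. r < Suc k \<Longrightarrow> c < Suc k \<Longrightarrow>
                       A' $$ (r, c) = s r * of_bool (lo' c \<le> p r \<and> p r < hi c)"
      and row_r0: "\<And>c. c < Suc k \<Longrightarrow> A' $$ (r0, c) = (if c = c0 then s r0 else 0)"
      using interval_columns_clear_first_row[OF A entries r0 r0_first c0 c0_shortest] by blast
    have "det A = s r0 * cofactor A' r0 c0"
      using det_row_single_entry[OF A' r0 c0(1)] row_r0 c0(1) det by simp
    moreover have "signed_interval_matrix A'"
      using A' s entries'
      by (intro signed_interval_matrixI[where s = s and p = p and lo = lo' and hi = hi]) auto
    then have "det (mat_delete A' r0 c0) \<in> {-1, 0, 1}"
      using A' by (intro Suc.IH signed_interval_matrix_mat_delete) (auto simp: mat_delete_carrier)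
    ultimately show ?thesis
      using s[OF r0] by (auto simp: cofactor_def minus_one_power_iff)
  qed
qed

lemma totally_unimodular_if_signed_interval_matrix:
  assumes "signed_interval_matrix A"
  shows "totally_unimodular A"
  unfolding totally_unimodular_def
proof (intro allI impI)
  fix I J assume I: "I \<subseteq> {..<dim_row A}" and J: "J \<subseteq> {..<dim_col A}" and card: "card I = card J"
  have "{i. i < dim_row A \<and> i \<in> I} = I" "{j. j < dim_col A \<and> j \<in> J} = J"
    using I J by auto
  then have "dim_row (submatrix A I J) = card I" and "dim_col (submatrix A I J) = card I"
    using card by (simp_all only: dim_submatrix)
  then have "submatrix A I J \<in> carrier_mat (card I) (card I)"
    by (rule carrier_matI)
  with signed_interval_matrix_submatrix[OF assms] show "det (submatrix A I J) \<in> {-1, 0, 1}"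
    by (rule det_signed_interval_matrix)
qed

text \<open>With the rows of the top block listed bottom-up, column \<open>c\<close> is supported on the
  positions from \<open>Kt - ot c\<close> to \<open>Kt + oh c\<close>.\<close>

lemma signed_interval_matrix_ordinal_cost_stack:
  assumes "\<alpha> \<in> {-1, 0, 1}" and "\<beta> \<in> {-1, 0, 1}"
  shows "signed_interval_matrix
           ((\<alpha> \<cdot>\<^sub>m ordinal_cost_matrix Kt n ot)
            @\<^sub>r (mat 1 n (\<lambda>_. 1))
            @\<^sub>r (\<beta> \<cdot>\<^sub>m ordinal_cost_matrix Kh n oh))"
  (is "signed_interval_matrix ?M")
proof (rule signed_interval_matrixI
    [where s = "\<lambda>i. if i < Kt then \<alpha> else if i = Kt then 1 else \<beta>"
      and p = "\<lambda>i. if i < Kt then Kt - 1 - i else i"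
      and lo = "\<lambda>c. Kt - ot c" and hi = "\<lambda>c. Kt + 1 + oh c"])
  fix i
  show "(if i < Kt then \<alpha> else if i = Kt then 1 else \<beta>) \<in> {-1, 0, 1}"
    using assms by simp
next
  fix i c assume "i < dim_row ?M" and "c < dim_col ?M"
  then have i: "i < Kt + 1 + Kh" and c: "c < n"
    by (simp_all add: append_rows_def ordinal_cost_matrix_def)
  consider "i < Kt" | "i = Kt" | "Kt < i" by linarith
  then show "?M $$ (i, c) = (if i < Kt then \<alpha> else if i = Kt then 1 else \<beta>) *
      of_bool (Kt - ot c \<le> (if i < Kt then Kt - 1 - i else i) \<and>
               (if i < Kt then Kt - 1 - i else i) < Kt + 1 + oh c)"
    by cases (use i c in \<open>auto simp: append_rows_def ordinal_cost_matrix_def\<close>)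
qed

theorem corollary2:
  fixes \<alpha> \<beta> :: int and Kt Kh n :: nat and ot oh :: "nat \<Rightarrow> nat"
  assumes "\<alpha> \<in> {-1, 0, 1}" and "\<beta> \<in> {-1, 0, 1}"
    and "ordinal_assignment Kt n ot" and "ordinal_assignment Kh n oh"
  shows "totally_unimodular
           ((\<alpha> \<cdot>\<^sub>m ordinal_cost_matrix Kt n ot)
            @\<^sub>r (mat 1 n (\<lambda>_. 1))
            @\<^sub>r (\<beta> \<cdot>\<^sub>m ordinal_cost_matrix Kh n oh))"
  using assms(1,2)
  by (intro totally_unimodular_if_signed_interval_matrix signed_interval_matrix_ordinal_cost_stack)

end
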